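(* If a natural number $m$ occurs twice in $(a(n))_{n\ge0}$, say $a(x)=a(y)=m$ with $x<y$, then $y=x+1$.
   Context: $\mathbb{N}=\{0,1,2,\ldots\}$. Let $(F_n)_{n\ge 0}$ be the Fibonacci numbers: $F_0=0$, $F_1=1$, $F_n=F_{n-1}+F_{n-2}$ for $n\ge 2$. Define $(a(n))_{n\ge 0}$ (OEIS A105774) by $a(0)=0$, $a(1)=1$, and for $n\ge 2$, $a(n)=F_{j+1}-a(n-F_j)$, where $j\ge 2$ is the unique index with $F_j<n\le F_{j+1}$. *)

theory Defs
  imports Main "HOL-Number_Theory.Fib"
begin

text \<open>The unique index j \<ge> 2 with F_j < n \<le> F_(j+1) (meaningful for n \<ge> 2).\<close>
definition fib_idx :: "nat \<Rightarrow> nat" where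
  "fib_idx n = (THE j. 2 \<le> j \<and> fib j < n \<and> n \<le> fib (Suc j))"

text \<open>OEIS A105774. Values taken in int so that the subtraction is the true one.\<close>
function a :: "nat \<Rightarrow> int" where
  "a n = (if n \<le> 1 then int n
          else int (fib (Suc (fib_idx n))) - a (n - fib (fib_idx n)))"
  by auto
termination
proof (relation "measure id")
  show "wf (measure id)" by simp
next
  fix n :: nat
  assume "\<not> n \<le> 1"
  then have n2: "2 \<le> n" by simp
  have ex: "\<exists>j. 2 \<le> j \<and> fib j < n \<and> n \<le> fib (Suc j)"
  proof -
    have "\<exists>k. n \<le> fib k"
    proof
      show "n \<le> fib (Suc (Suc n))"
      proof (induction n)
        case 0 then show ?case by simp
      next
        case (Suc m)
        have "fib (Suc m) \<ge> 1" using fib_mono[of 1 "Suc m"] by simp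
        then show ?case using Suc by simp
      qed
    qed
    define k where "k = (LEAST k. n \<le> fib k)"
    have kP: "n \<le> fib k" unfolding k_def by (rule LeastI_ex) fact
    have k3: "k \<ge> 3"
    proof (rule ccontr)
      assume "\<not> k \<ge> 3"
      then have "k \<in> {0,1,2}" by auto
      then show False using kP n2 by (auto simp: numeral_2_eq_2)
    qed
    then obtain j where kj: "k = Suc j" and j2: "2 \<le> j" by (cases k) auto
    have "\<not> n \<le> fib j" using not_less_Least[of j "\<lambda>k. n \<le> fib k"] kj k_def by auto
    then show ?thesis using kP kj j2 by auto
  qed
  have P: "2 \<le> fib_idx n \<and> fib (fib_idx n) < n \<and> n \<le> fib (Suc (fib_idx n))"
  proof -
    have uq: "\<And>i j. 2 \<le> i \<Longrightarrow> fib i < n \<Longrightarrow> n \<le> fib (Suc i) \<Longrightarrow>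
                 2 \<le> j \<Longrightarrow> fib j < n \<Longrightarrow> n \<le> fib (Suc j) \<Longrightarrow> i = j"
    proof -
      fix i j assume h: "2 \<le> i" "fib i < n" "n \<le> fib (Suc i)" "2 \<le> j" "fib j < n" "n \<le> fib (Suc j)"
      show "i = j"
      proof (rule ccontr)
        assume "i \<noteq> j"
        then have "Suc i \<le> j \<or> Suc j \<le> i" by auto
        then show False using h fib_mono[of "Suc i" j] fib_mono[of "Suc j" i] by auto
      qed
    qed
    have "\<exists>!j. 2 \<le> j \<and> fib j < n \<and> n \<le> fib (Suc j)"
      using ex uq by blast
    then show ?thesis unfolding fib_idx_def by (rule theI')
  qed
  have "fib (fib_idx n) \<ge> 1"
  proof -
    have "fib 2 \<le> fib (fib_idx n)" using P fib_mono by blast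
    then show ?thesis by (simp add: numeral_2_eq_2)
  qed
  then show "(n - fib (fib_idx n), n) \<in> measure id" using P by simp
qed

declare a.simps[simp del]

end

theory Submission
  imports Defs
begin

text \<open>
  For \<open>n \<ge> 4\<close> with \<open>F\<^sub>j < n \<le> F\<^sub>j\<^sub>+\<^sub>1\<close>, the value \<open>a(n - F\<^sub>j)\<close> lies in \<open>[1, F\<^sub>j\<^sub>-\<^sub>1)\<close>, so
  \<open>a(n) = F\<^sub>j\<^sub>+\<^sub>1 - a(n - F\<^sub>j)\<close> lies strictly between \<open>F\<^sub>j\<close> and \<open>F\<^sub>j\<^sub>+\<^sub>1\<close>. Hence two arguments
  with equal values have the same index \<open>j\<close>, and subtracting \<open>F\<^sub>j\<close> from both gives a
  smaller pair with equal values. Induction ends in the initial values 0, 1, 1, 2.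
\<close>

lemma less_of_fib_less: "fib m < fib n \<Longrightarrow> m < n"
  using fib_mono[of n m] by (cases "n \<le> m") auto

lemma le_fib_Suc_Suc: "n \<le> fib (Suc (Suc n))"
proof (induction n)
  case (Suc n)
  have "1 \<le> fib (Suc n)" using fib_mono[of 1 "Suc n"] by simp
  with Suc show ?case by simp
qed simp

lemma fib_idx_exists:
  assumes "2 \<le> n"
  shows "\<exists>j. 2 \<le> j \<and> fib j < n \<and> n \<le> fib (Suc j)"
proof -
  define k where "k = (LEAST k. n \<le> fib k)"
  have n_le: "n \<le> fib k"
    unfolding k_def by (rule LeastI) (rule le_fib_Suc_Suc)
  have "3 \<le> k"
  proof (rule ccontr)
    assume "\<not> 3 \<le> k"
    then have "k \<in> {0, 1, 2}" by auto
    with n_le assms show False by auto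
  qed
  then obtain j where k: "k = Suc j" and "2 \<le> j" by (cases k) auto
  moreover have "\<not> n \<le> fib j"
    using not_less_Least[of j "\<lambda>k. n \<le> fib k"] k k_def by auto
  ultimately show ?thesis using n_le by auto
qed

lemma fib_idx_eqI:
  assumes "2 \<le> j" "fib j < n" "n \<le> fib (Suc j)"
  shows "fib_idx n = j"
  unfolding fib_idx_def
proof (rule the_equality)
  fix i assume i: "2 \<le> i \<and> fib i < n \<and> n \<le> fib (Suc i)"
  then have "i < Suc j" "j < Suc i"
    using less_of_fib_less[of i "Suc j"] less_of_fib_less[of j "Suc i"] assms by auto
  then show "i = j" by simp
qed (use assms in simp)

lemma fib_idx_bounds:
  assumes "2 \<le> n"
  shows "2 \<le> fib_idx n" and "fib (fib_idx n) < n" and "n \<le> fib (Suc (fib_idx n))"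
  using fib_idx_exists[OF assms] fib_idx_eqI by auto

lemma a_rec: "2 \<le> n \<Longrightarrow> a n = int (fib (Suc (fib_idx n))) - a (n - fib (fib_idx n))"
  by (subst a.simps) simp

lemma a_initial: "a 0 = 0" "a 1 = 1" "a 2 = 1" "a 3 = 2"
proof -
  show a0: "a 0 = 0" and a1: "a 1 = 1" by (subst a.simps; simp)+
  have "fib_idx 2 = 2" "fib_idx 3 = 3"
    by (rule fib_idx_eqI; simp add: numeral_2_eq_2 numeral_3_eq_3)+
  then show "a 2 = 1" "a 3 = 2"
    using a_rec[of 2] a_rec[of 3] a1 by (simp_all add: numeral_2_eq_2 numeral_3_eq_3)
qed

text \<open>Positivity and the upper bound must be proved together: each is needed for the other
  at the smaller argument \<open>n - F\<^sub>j\<close>. The bound fails at \<open>F\<^sub>2 = 1 = a(1)\<close>, hence \<open>i \<ge> 3\<close>.\<close>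

lemma a_pos_less_fib:
  assumes "1 \<le> n"
  shows "1 \<le> a n \<and> (\<forall>i\<ge>3. n \<le> fib i \<longrightarrow> a n < int (fib i))"
  using assms
proof (induction n rule: less_induct)
  case (less n)
  show ?case
  proof (cases "n = 1")
    case True
    have "2 \<le> fib i" if "3 \<le> i" for i
      using fib_mono[OF that] by (simp add: numeral_3_eq_3)
    with True show ?thesis using a_initial(2) by fastforce
  next
    case False
    with less.prems have n2: "2 \<le> n" by simp
    define j where "j = fib_idx n"
    define k where "k = n - fib j"
    have j: "2 \<le> j" "fib j < n" "n \<le> fib (Suc j)"
      using fib_idx_bounds[OF n2] unfolding j_def by auto
    have "1 \<le> fib j" using fib_mono[of 2 j] j by simp
    then have "1 \<le> k" "k < n" using j unfolding k_def by auto
    then have IH: "1 \<le> a k" "\<forall>i\<ge>3. k \<le> fib i \<longrightarrow> a k < int (fib i)"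
      using less.IH by auto
    have an: "a n = int (fib (Suc j)) - a k"
      using a_rec[OF n2] unfolding j_def k_def by simp
    have "a k < int (fib (Suc j))" using IH j unfolding k_def by auto
    moreover have "fib (Suc j) \<le> fib i" if "n \<le> fib i" for i
      using fib_mono less_of_fib_less[of j i] j that by (simp add: Suc_leI)
    ultimately show ?thesis using an IH by force
  qed
qed

lemma a_between_fib:
  assumes "4 \<le> n"
  shows "4 \<le> fib_idx n" and "int (fib (fib_idx n)) < a n" and "a n < int (fib (Suc (fib_idx n)))"
proof -
  define j where "j = fib_idx n"
  define k where "k = n - fib j"
  have j: "2 \<le> j" "fib j < n" "n \<le> fib (Suc j)"
    using fib_idx_bounds assms unfolding j_def by auto
  show j4: "4 \<le> fib_idx n"
  proof (rule ccontr)
    assume "\<not> 4 \<le> fib_idx n"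
    then have "fib (Suc j) \<le> fib 4" unfolding j_def by (intro fib_mono) simp
    with j assms show False by (simp add: eval_nat_numeral)
  qed
  obtain i where i: "j = Suc i" using j by (cases j) auto
  have "1 \<le> fib j" using fib_mono[of 2 j] j by simp
  then have "1 \<le> k" "k \<le> fib i" using i j unfolding k_def by auto
  then have "1 \<le> a k" "a k < int (fib i)"
    using a_pos_less_fib[of k] i j4 unfolding j_def by auto
  moreover have "a n = int (fib j) + int (fib i) - a k"
    using a_rec[of n] assms i unfolding j_def k_def by simp
  ultimately show "int (fib (fib_idx n)) < a n" "a n < int (fib (Suc (fib_idx n)))"
    using i unfolding j_def by auto
qed

lemma fib_idx_eq_if_a_eq:
  assumes "4 \<le> x" "4 \<le> y" "a x = a y"
  shows "fib_idx x = fib_idx y"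
proof -
  have "\<not> fib_idx u < fib_idx v" if "4 \<le> u" "4 \<le> v" "a u = a v" for u v
  proof
    assume "fib_idx u < fib_idx v"
    then have "fib (Suc (fib_idx u)) \<le> fib (fib_idx v)" by (intro fib_mono) simp
    with a_between_fib[OF \<open>4 \<le> u\<close>] a_between_fib[OF \<open>4 \<le> v\<close>] \<open>a u = a v\<close> show False
      by simp
  qed
  with assms show ?thesis by (metis linorder_neqE_nat)
qed

lemma a_eq_imp_consecutive: "x < y \<Longrightarrow> a x = a y \<Longrightarrow> y = Suc x"
proof (induction y arbitrary: x rule: less_induct)
  case (less y)
  show ?case
  proof (cases "y \<le> 3")
    case True
    then have "y \<in> {1, 2, 3}" "x \<in> {0, 1, 2}" using less.prems by auto
    then show ?thesis using less.prems a_initial by auto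
  next
    case False
    then have y4: "4 \<le> y" by simp
    define j where "j = fib_idx y"
    have "3 \<le> fib j"
      using fib_mono[of 4 j] a_between_fib(1)[OF y4] unfolding j_def by (simp add: eval_nat_numeral)
    have x4: "4 \<le> x"
    proof (rule ccontr)
      assume "\<not> 4 \<le> x"
      then have "x \<in> {0, 1, 2, 3}" by auto
      then have "a x \<le> 2" using a_initial by auto
      with a_between_fib(2)[OF y4] \<open>3 \<le> fib j\<close> less.prems show False
        unfolding j_def by simp
    qed
    have same_idx: "fib_idx x = j"
      using fib_idx_eq_if_a_eq x4 y4 less.prems unfolding j_def by blast
    have "fib j < x" using fib_idx_bounds(2)[of x] x4 same_idx by simp
    have "a (x - fib j) = a (y - fib j)"
      using a_rec[of x] a_rec[of y] x4 y4 same_idx less.prems unfolding j_def by simp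
    moreover have "x - fib j < y - fib j" "y - fib j < y"
      using \<open>fib j < x\<close> \<open>3 \<le> fib j\<close> less.prems by auto
    ultimately have "y - fib j = Suc (x - fib j)" using less.IH by blast
    with \<open>fib j < x\<close> show ?thesis by simp
  qed
qed

theorem proposition2:
  fixes m :: nat and x y :: nat
  assumes "a x = int m" and "a y = int m" and "x < y"
  shows "y = x + 1"
  using a_eq_imp_consecutive[of x y] assms by simp

end
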